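(* Let $m\ge2$, $N\in\mathbb{N}$, let $\Omega\subset\mathbb{R}^m$ be a bounded open connected set, and let $\overline\Omega=\{(x_1,\ldots,x_N)\in\Omega^N: x_i\neq x_j \text{ for all } i\neq j\}$. Let $V_1,\ldots,V_d$ be smooth vector fields on $\mathbb{R}^m$ such that $\mathrm{Lie}(V_1,\ldots,V_d)$ interpolates at the tuple $\bar x=(x_1,\ldots,x_N)\in\overline\Omega$. Then \[ \mathrm{Lie}(V_1^{\oplus N},\ldots,V_d^{\oplus N})(\bar x)=(\mathbb{R}^m)^N, \] i.e. the vector fields $V_1^{\oplus N},\ldots,V_d^{\oplus N}$ on $(\mathbb{R}^m)^N$ satisfy the Hörmander condition at $\bar x$.
   Context: For smooth vector fields $U,V$ on $\mathbb{R}^n$, the Lie bracket is $[U,V](x)=DV(x)U(x)-DU(x)V(x)$, with $DU$ the Jacobian matrix. $\mathrm{Lie}(U_1,\ldots,U_d)$ is the smallest linear space of vector fields containing $U_1,\ldots,U_d$ and closed under Lie brackets, and $\mathrm{Lie}(U_1,\ldots,U_d)(x)=\{W(x): W\in\mathrm{Lie}(U_1,\ldots,U_d)\}\subseteq\mathbb{R}^n$. For a vector field $V$ on $\mathbb{R}^m$, $V^{\oplus N}$ is the vector field on $(\mathbb{R}^m)^N$ given by $V^{\oplus N}(x_1,\ldots,x_N)=(V(x_1),\ldots,V(x_N))$. A collection $\mathcal V$ of vector fields on $\mathbb{R}^m$ interpolates at a tuple $(x_1,\ldots,x_N)$ if for every $(v_1,\ldots,v_N)\in(\mathbb{R}^m)^N$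 there exists $\widehat V\in\mathcal V$ with $\widehat V(x_i)=v_i$ for all $i=1,\ldots,N$. *)

theory Defs
  imports "HOL-Analysis.Analysis"
begin

text \<open>Smooth (C-infinity) maps: differentiable everywhere, and every directional
derivative map x \<mapsto> Df(x) v is again smooth (coinductively, so derivatives of all
orders exist everywhere).\<close>
coinductive smooth_map :: "('a::real_normed_vector \<Rightarrow> 'b::real_normed_vector) \<Rightarrow> bool" where
  "(\<And>x. f differentiable (at x)) \<Longrightarrow>
   (\<And>v. smooth_map (\<lambda>x. frechet_derivative f (at x) v)) \<Longrightarrow> smooth_map f"

definition lie_bracket ::
  "('a::real_normed_vector \<Rightarrow> 'a) \<Rightarrow> ('a \<Rightarrow> 'a) \<Rightarrow> ('a \<Rightarrow> 'a)" where
  "lie_bracket U V = (\<lambda>x. frechet_derivative V (at x) (U x) - frechet_derivative U (at x) (V x))"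

inductive_set lie_gen :: "('a::real_normed_vector \<Rightarrow> 'a) set \<Rightarrow> ('a \<Rightarrow> 'a) set"
  for S where
  base: "U \<in> S \<Longrightarrow> U \<in> lie_gen S"
| zero: "(\<lambda>x. 0) \<in> lie_gen S"
| add: "U \<in> lie_gen S \<Longrightarrow> W \<in> lie_gen S \<Longrightarrow> (\<lambda>x. U x + W x) \<in> lie_gen S"
| scale: "U \<in> lie_gen S \<Longrightarrow> (\<lambda>x. c *\<^sub>R U x) \<in> lie_gen S"
| bracket: "U \<in> lie_gen S \<Longrightarrow> W \<in> lie_gen S \<Longrightarrow> lie_bracket U W \<in> lie_gen S"

definition lie_at :: "('a::real_normed_vector \<Rightarrow> 'a) set \<Rightarrow> 'a \<Rightarrow> 'a set" where
  "lie_at S x = {W x | W. W \<in> lie_gen S}"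

text \<open>V^{\<oplus>N} on (R^m)^N, with N = CARD('n).\<close>
definition direct_sum_vf :: "('a \<Rightarrow> 'a) \<Rightarrow> ('a ^ 'n \<Rightarrow> 'a ^ 'n)" where
  "direct_sum_vf V = (\<lambda>X. \<chi> i. V (X $ i))"

definition interpolates :: "('a \<Rightarrow> 'b) set \<Rightarrow> ('n \<Rightarrow> 'a) \<Rightarrow> bool" where
  "interpolates \<V> x \<longleftrightarrow> (\<forall>v :: 'n \<Rightarrow> 'b. \<exists>W\<in>\<V>. \<forall>i. W (x i) = v i)"

end

theory Submission
  imports Defs
begin

text \<open>Taking direct sums commutes with Lie brackets of smooth vector fields,
[U^{\<oplus>N}, W^{\<oplus>N}] = [U, W]^{\<oplus>N}, because the Jacobian of U^{\<oplus>N} is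
block diagonal. Since Lie brackets of smooth fields are smooth, induction over Lie(V_1, ..., V_d)
gives W^{\<oplus>N} \<in> Lie(V_1^{\<oplus>N}, ..., V_d^{\<oplus>N}) for every W \<in> Lie(V_1, ..., V_d).
The value of W^{\<oplus>N} at (x_1, ..., x_N) is (W x_1, ..., W x_N), which by interpolation can be
any prescribed vector.\<close>

lemma smooth_map_differentiable: "smooth_map f \<Longrightarrow> f differentiable (at x)"
  by (erule smooth_map.cases) auto

lemma smooth_map_frechet_derivative:
  "smooth_map f \<Longrightarrow> smooth_map (\<lambda>x. frechet_derivative f (at x) v)"
  by (erule smooth_map.cases) auto

lemma smooth_map_has_derivative:
  "smooth_map f \<Longrightarrow> (f has_derivative frechet_derivative f (at x)) (at x)"
  using smooth_map_differentiable frechet_derivative_works by blast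

lemma frechet_derivative_eqI: "(f has_derivative D) (at x) \<Longrightarrow> frechet_derivative f (at x) = D"
  by (rule frechet_derivative_at[symmetric])

lemma smooth_map_invariantI:
  assumes "P f"
    and "\<And>g x. P g \<Longrightarrow> g differentiable (at x)"
    and "\<And>g v. P g \<Longrightarrow> P (\<lambda>x. frechet_derivative g (at x) v)"
  shows "smooth_map f"
  using assms(1) by (coinduction arbitrary: f rule: smooth_map.coinduct) (use assms(2,3) in blast)

lemma smooth_map_const:
  "smooth_map (\<lambda>x::'a::real_normed_vector. c :: 'b::real_normed_vector)"
proof (rule smooth_map_invariantI[where P = "\<lambda>g. \<exists>c. g = (\<lambda>x. c)"])
  fix g :: "'a \<Rightarrow> 'b" and v
  assume "\<exists>c. g = (\<lambda>x. c)"
  then obtain c where "g = (\<lambda>x. c)" by blast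
  then have "frechet_derivative g (at x) = (\<lambda>v. 0)" for x
    by (simp add: frechet_derivative_eqI)
  then show "\<exists>c. (\<lambda>x. frechet_derivative g (at x) v) = (\<lambda>x. c)" by auto
qed auto

text \<open>The derivative of a product a f is a sum of two products, so smoothness of products is
proved by coinduction for the larger class of finite sums of products.\<close>

inductive smooth_product_sum :: "('a::real_normed_vector \<Rightarrow> 'b::real_normed_vector) \<Rightarrow> bool"
where
  scaleR: "smooth_map a \<Longrightarrow> smooth_map f \<Longrightarrow> smooth_product_sum (\<lambda>x. a x *\<^sub>R f x)"
| add: "smooth_product_sum g \<Longrightarrow> smooth_product_sum h \<Longrightarrow> smooth_product_sum (\<lambda>x. g x + h x)"

lemma smooth_product_sum_differentiable:
  "smooth_product_sum h \<Longrightarrow> h differentiable (at x)"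
  by (induction rule: smooth_product_sum.induct)
    (auto intro: differentiable_scaleR smooth_map_differentiable)

lemma smooth_product_sum_frechet_derivative:
  "smooth_product_sum h \<Longrightarrow> smooth_product_sum (\<lambda>x. frechet_derivative h (at x) v)"
proof (induction rule: smooth_product_sum.induct)
  case (scaleR a f)
  have "frechet_derivative (\<lambda>x. a x *\<^sub>R f x) (at x) v =
      a x *\<^sub>R frechet_derivative f (at x) v + frechet_derivative a (at x) v *\<^sub>R f x" for x
    by (subst frechet_derivative_eqI[OF has_derivative_scaleR])
      (use smooth_map_has_derivative scaleR.hyps in auto)
  then show ?case
    by (simp add: smooth_product_sum.intros smooth_map_frechet_derivative scaleR.hyps)
next
  case (add g h)
  have "frechet_derivative (\<lambda>x. g x + h x) (at x) v =
      frechet_derivative g (at x) v + frechet_derivative h (at x) v" for x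
    by (subst frechet_derivative_eqI[OF has_derivative_add])
      (use frechet_derivative_works smooth_product_sum_differentiable add.hyps in auto)
  then show ?case by (simp add: smooth_product_sum.add add.IH)
qed

lemma smooth_product_sum_imp_smooth_map: "smooth_product_sum h \<Longrightarrow> smooth_map h"
  by (rule smooth_map_invariantI[where P = smooth_product_sum])
    (auto intro: smooth_product_sum_differentiable smooth_product_sum_frechet_derivative)

lemma smooth_map_scaleR:
  "smooth_map a \<Longrightarrow> smooth_map f \<Longrightarrow> smooth_map (\<lambda>x. a x *\<^sub>R f x)"
  by (rule smooth_product_sum_imp_smooth_map[OF smooth_product_sum.scaleR])

lemma smooth_map_add:
  assumes "smooth_map f" "smooth_map g"
  shows "smooth_map (\<lambda>x. f x + g x)"
proof -
  have "smooth_product_sum (\<lambda>x. 1 *\<^sub>R f x + 1 *\<^sub>R g x)"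
    by (intro smooth_product_sum.intros smooth_map_const assms)
  then show ?thesis by (simp add: smooth_product_sum_imp_smooth_map)
qed

lemma smooth_map_scaleR_const: "smooth_map f \<Longrightarrow> smooth_map (\<lambda>x. c *\<^sub>R f x)"
  by (rule smooth_map_scaleR[OF smooth_map_const])

lemma smooth_map_diff: "smooth_map f \<Longrightarrow> smooth_map g \<Longrightarrow> smooth_map (\<lambda>x. f x - g x)"
  using smooth_map_add[of f "\<lambda>x. (-1) *\<^sub>R g x"] smooth_map_scaleR_const[of g "-1"] by simp

lemma smooth_map_sum:
  "finite A \<Longrightarrow> (\<And>b. b \<in> A \<Longrightarrow> smooth_map (f b)) \<Longrightarrow> smooth_map (\<lambda>x. \<Sum>b\<in>A. f b x)"
  by (induction A rule: finite_induct) (simp_all add: smooth_map_const smooth_map_add)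

lemma smooth_map_bounded_linear_comp:
  assumes "bounded_linear L" "smooth_map f"
  shows "smooth_map (\<lambda>x. L (f x))"
proof (rule smooth_map_invariantI[where P = "\<lambda>g. \<exists>f. smooth_map f \<and> g = (\<lambda>x. L (f x))"])
  fix g v
  assume "\<exists>f. smooth_map f \<and> g = (\<lambda>x. L (f x))"
  then obtain f where f: "smooth_map f" "g = (\<lambda>x. L (f x))" by blast
  have deriv: "(g has_derivative (\<lambda>v. L (frechet_derivative f (at x) v))) (at x)" for x
    unfolding f(2) by (rule bounded_linear.has_derivative[OF assms(1) smooth_map_has_derivative[OF f(1)]])
  then show "g differentiable (at x)" for x
    unfolding differentiable_def by blast
  show "\<exists>f. smooth_map f \<and> (\<lambda>x. frechet_derivative g (at x) v) = (\<lambda>x. L (f x))"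
    using smooth_map_frechet_derivative[OF f(1)] by (auto simp: frechet_derivative_eqI[OF deriv])
qed (use assms in blast)

lemma frechet_derivative_eq_sum_Basis:
  fixes f :: "'a::euclidean_space \<Rightarrow> 'b::real_normed_vector"
  assumes "f differentiable (at x)"
  shows "frechet_derivative f (at x) u = (\<Sum>b\<in>Basis. (u \<bullet> b) *\<^sub>R frechet_derivative f (at x) b)"
proof -
  have "linear (frechet_derivative f (at x))"
    using assms frechet_derivative_works has_derivative_linear by blast
  then show ?thesis
    by (subst euclidean_representation[symmetric, of u]) (simp add: linear_sum linear_scale)
qed

lemma smooth_map_lie_bracket:
  fixes U W :: "'a::euclidean_space \<Rightarrow> 'a"
  assumes "smooth_map U" "smooth_map W"
  shows "smooth_map (lie_bracket U W)"
proof -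
  have "lie_bracket U W = (\<lambda>x. (\<Sum>b\<in>Basis. (U x \<bullet> b) *\<^sub>R frechet_derivative W (at x) b)
      - (\<Sum>b\<in>Basis. (W x \<bullet> b) *\<^sub>R frechet_derivative U (at x) b))"
    unfolding lie_bracket_def
    by (intro ext arg_cong2[where f = minus] frechet_derivative_eq_sum_Basis
        smooth_map_differentiable assms)
  then show ?thesis
    by (simp only:) (intro smooth_map_diff smooth_map_sum finite_Basis smooth_map_scaleR
        smooth_map_frechet_derivative assms smooth_map_bounded_linear_comp[OF bounded_linear_inner_left])
qed

lemma lie_gen_smooth_map:
  fixes S :: "('a::euclidean_space \<Rightarrow> 'a) set"
  assumes "W \<in> lie_gen S" "\<And>U. U \<in> S \<Longrightarrow> smooth_map U"
  shows "smooth_map W"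
  using assms(1)
  by induction (simp_all add: assms(2) smooth_map_const smooth_map_add smooth_map_scaleR_const
      smooth_map_lie_bracket)

lemma vec_lambda_eq_sum_axis: "(\<chi> i. g i) = (\<Sum>i\<in>UNIV. axis i (g i) :: 'a::real_normed_vector ^ 'n)"
  by (simp add: vec_eq_iff axis_def)

lemma bounded_linear_axis: "bounded_linear (axis i :: 'a::real_normed_vector \<Rightarrow> 'a ^ 'n)"
proof (rule bounded_linear_intro[of _ 1])
  show "norm (axis i x :: 'a ^ 'n) \<le> norm x * 1" for x :: 'a
  proof -
    have "(\<Sum>j\<in>UNIV. (norm (axis i x $ j))\<^sup>2) = (\<Sum>j\<in>UNIV. if j = i then (norm x)\<^sup>2 else 0)"
      by (rule sum.cong) (auto simp: axis_def)
    then show ?thesis by (simp add: norm_vec_def L2_set_def)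
  qed
qed (simp_all add: axis_def vec_eq_iff)

lemma has_derivative_vec_lambda:
  fixes f :: "'n::finite \<Rightarrow> 'a::real_normed_vector \<Rightarrow> 'b::real_normed_vector"
  assumes "\<And>i. (f i has_derivative f' i) F"
  shows "((\<lambda>x. \<chi> i. f i x) has_derivative (\<lambda>h. \<chi> i. f' i h)) F"
  unfolding vec_lambda_eq_sum_axis
  by (intro has_derivative_sum bounded_linear.has_derivative[OF bounded_linear_axis] assms)

lemma has_derivative_direct_sum_vf:
  fixes U :: "'a::real_normed_vector \<Rightarrow> 'a"
  assumes "\<And>i. U differentiable (at (X $ i))"
  shows "((direct_sum_vf U :: 'a ^ 'n \<Rightarrow> 'a ^ 'n) has_derivative
    (\<lambda>H. \<chi> i. frechet_derivative U (at (X $ i)) (H $ i))) (at X)"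
  unfolding direct_sum_vf_def
proof (rule has_derivative_vec_lambda)
  fix i
  show "((\<lambda>Y. U (Y $ i)) has_derivative (\<lambda>H. frechet_derivative U (at (X $ i)) (H $ i))) (at X)"
    using diff_chain_at[OF bounded_linear_imp_has_derivative[OF bounded_linear_vec_nth]
        frechet_derivative_works[THEN iffD1, OF assms]]
    by (simp add: o_def)
qed

lemma lie_bracket_direct_sum_vf:
  fixes U W :: "'a::real_normed_vector \<Rightarrow> 'a"
  assumes "\<And>x. U differentiable (at x)" "\<And>x. W differentiable (at x)"
  shows "lie_bracket (direct_sum_vf U :: 'a ^ 'n \<Rightarrow> 'a ^ 'n) (direct_sum_vf W) =
    direct_sum_vf (lie_bracket U W)"
  unfolding lie_bracket_def
  by (simp add: frechet_derivative_eqI[OF has_derivative_direct_sum_vf] assms)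
    (simp add: direct_sum_vf_def fun_eq_iff vec_eq_iff)

lemma direct_sum_vf_lie_gen:
  fixes S :: "('a::euclidean_space \<Rightarrow> 'a) set"
  assumes "W \<in> lie_gen S" "\<And>U. U \<in> S \<Longrightarrow> smooth_map U"
  shows "(direct_sum_vf W :: 'a ^ 'n \<Rightarrow> 'a ^ 'n) \<in> lie_gen (direct_sum_vf ` S)"
  using assms(1)
proof induction
  case (base U)
  then show ?case by (simp add: lie_gen.base)
next
  case zero
  have "(direct_sum_vf (\<lambda>x::'a. 0) :: 'a ^ 'n \<Rightarrow> 'a ^ 'n) = (\<lambda>X. 0)"
    by (simp add: direct_sum_vf_def vec_eq_iff fun_eq_iff)
  then show ?case by (simp add: lie_gen.zero)
next
  case (add U W)
  have "(direct_sum_vf (\<lambda>x. U x + W x) :: 'a ^ 'n \<Rightarrow> 'a ^ 'n) =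
      (\<lambda>X. direct_sum_vf U X + direct_sum_vf W X)"
    by (simp add: direct_sum_vf_def vec_eq_iff fun_eq_iff)
  then show ?case by (simp add: lie_gen.add add.IH)
next
  case (scale U c)
  have "(direct_sum_vf (\<lambda>x. c *\<^sub>R U x) :: 'a ^ 'n \<Rightarrow> 'a ^ 'n) = (\<lambda>X. c *\<^sub>R direct_sum_vf U X)"
    by (simp add: direct_sum_vf_def vec_eq_iff fun_eq_iff)
  then show ?case by (simp add: lie_gen.scale scale.IH)
next
  case (bracket U W)
  have "smooth_map U" "smooth_map W"
    using bracket.hyps lie_gen_smooth_map assms(2) by blast+
  then have "(direct_sum_vf (lie_bracket U W) :: 'a ^ 'n \<Rightarrow> 'a ^ 'n) =
      lie_bracket (direct_sum_vf U) (direct_sum_vf W)"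
    by (simp add: lie_bracket_direct_sum_vf smooth_map_differentiable)
  then show ?case by (simp add: lie_gen.bracket bracket.IH)
qed

lemma lie_at_direct_sum_vf_eq_UNIV:
  fixes S :: "('a::euclidean_space \<Rightarrow> 'a) set" and x :: "'a ^ 'n"
  assumes "\<And>U. U \<in> S \<Longrightarrow> smooth_map U" "interpolates (lie_gen S) (\<lambda>i. x $ i)"
  shows "lie_at (direct_sum_vf ` S) x = UNIV"
proof -
  have "v \<in> lie_at (direct_sum_vf ` S) x" for v
  proof -
    obtain W where W: "W \<in> lie_gen S" "\<And>i. W (x $ i) = v $ i"
      using assms(2) unfolding interpolates_def by blast
    have "direct_sum_vf W x = v"
      using W(2) by (simp add: direct_sum_vf_def vec_eq_iff)
    then show ?thesis
      unfolding lie_at_def using direct_sum_vf_lie_gen[OF W(1) assms(1)] by blast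
  qed
  then show ?thesis by blast
qed

theorem lemma1:
  fixes \<Omega> :: "(real ^ 'm) set"
    and x :: "(real ^ 'm) ^ 'n"
    and d :: nat
    and V :: "nat \<Rightarrow> (real ^ 'm \<Rightarrow> real ^ 'm)"
  assumes "CARD('m) \<ge> 2"
    and "bounded \<Omega>" and "open \<Omega>" and "connected \<Omega>"
    and "\<forall>i. x $ i \<in> \<Omega>"
    and "\<forall>i j. i \<noteq> j \<longrightarrow> x $ i \<noteq> x $ j"
    and "\<forall>k<d. smooth_map (V k)"
    and "interpolates (lie_gen (V ` {..<d})) (\<lambda>i. x $ i)"
  shows "lie_at ((\<lambda>k. direct_sum_vf (V k) :: (real ^ 'm) ^ 'n \<Rightarrow> (real ^ 'm) ^ 'n) ` {..<d}) x = UNIV"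
proof -
  have "(\<lambda>k. direct_sum_vf (V k) :: (real ^ 'm) ^ 'n \<Rightarrow> (real ^ 'm) ^ 'n) ` {..<d} =
      direct_sum_vf ` V ` {..<d}"
    by (simp add: image_image)
  moreover have "\<And>U. U \<in> V ` {..<d} \<Longrightarrow> smooth_map U"
    using assms(7) by blast
  ultimately show ?thesis
    using lie_at_direct_sum_vf_eq_UNIV assms(8) by metis
qed

end
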